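(* Let $X$ be a set, $\mathcal{F}\subseteq\mathcal{P}(X)$ a $\sigma$-field, and $\mu:\mathcal{F}\to[0,1]$ a countably subadditive set function with $\mu(\emptyset)=0$. Then the pseudometric space $(\mathcal{F}, d_\mu)$, where $d_\mu(A,B):=\mu(A\triangle B)$, is complete.
   Context: $\mu$ is countably subadditive if for any $A,A_1,A_2,\ldots\in\mathcal{F}$, $I_A\le\sum_{k=1}^\infty I_{A_k}$ implies $\mu(A)\le\sum_{k=1}^\infty\mu(A_k)$, where $I_B$ denotes the indicator function of $B$. *)

theory Defs
  imports "HOL-Analysis.Analysis"
begin

text \<open>Sums are taken in ennreal, so divergent sums are allowed.\<close>
definition countably_subadditive :: "'a set set \<Rightarrow> ('a set \<Rightarrow> real) \<Rightarrow> bool" where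
  "countably_subadditive F \<mu> \<longleftrightarrow>
     (\<forall>A (As :: nat \<Rightarrow> 'a set). A \<in> F \<longrightarrow> range As \<subseteq> F \<longrightarrow>
        (\<forall>x. (indicator A x :: ennreal) \<le> (\<Sum>k. indicator (As k) x)) \<longrightarrow>
        ennreal (\<mu> A) \<le> (\<Sum>k. ennreal (\<mu> (As k))))"

definition symdiff :: "'a set \<Rightarrow> 'a set \<Rightarrow> 'a set" where
  "symdiff A B = (A - B) \<union> (B - A)"

definition dmu :: "('a set \<Rightarrow> real) \<Rightarrow> 'a set \<Rightarrow> 'a set \<Rightarrow> real" where
  "dmu \<mu> A B = \<mu> (symdiff A B)"

definition pseudometric_complete :: "'b set \<Rightarrow> ('b \<Rightarrow> 'b \<Rightarrow> real) \<Rightarrow> bool" where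
  "pseudometric_complete F d \<longleftrightarrow>
     (\<forall>S :: nat \<Rightarrow> 'b. range S \<subseteq> F \<longrightarrow>
        (\<forall>e>0. \<exists>N. \<forall>m\<ge>N. \<forall>n\<ge>N. d (S m) (S n) < e) \<longrightarrow>
        (\<exists>L\<in>F. (\<lambda>n. d (S n) L) \<longlonglongrightarrow> 0))"

end

theory Submission
  imports Defs
begin

text \<open>Pass to a subsequence T k = S (r k) along which the distances drop geometrically,
  d(T k, T (k+1)) < 2^-k, and take L = limsup T. A point of T j \<triangle> L must lie in some
  T k \<triangle> T (k+1) with k \<ge> j, since otherwise its membership in T k is constant from j on
  and so agrees with its membership in L. Countable subadditivity therefore bounds
  d(T j, L) by the geometric tail 2^(1-j), and the triangle inequality for d transfers the
  convergence from the subsequence to S.\<close>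

lemma countably_subadditive_cover:
  assumes "countably_subadditive F \<mu>" and "A \<in> F" and "range As \<subseteq> F"
    and "A \<subseteq> (\<Union>k. As k)"
  shows "ennreal (\<mu> A) \<le> (\<Sum>k. ennreal (\<mu> (As k)))"
proof -
  have "(indicator A x :: ennreal) \<le> (\<Sum>k. indicator (As k) x)" for x
  proof (cases "x \<in> A")
    case True
    then obtain k where k: "x \<in> As k" using assms(4) by blast
    have "(\<Sum>i\<in>{k}. indicator (As i) x :: ennreal) \<le> (\<Sum>i. indicator (As i) x)"
      by (rule sum_le_suminf[OF summableI]) auto
    then show ?thesis using True k by simp
  qed simp
  then show ?thesis using assms(1-3) unfolding countably_subadditive_def by blast
qed

lemma countably_subadditive_Un:
  assumes "countably_subadditive F \<mu>" and "{} \<in> F" and "\<mu> {} = 0"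
    and "\<forall>A\<in>F. 0 \<le> \<mu> A"
    and "A \<in> F" and "B \<in> F" and "C \<in> F" and "A \<subseteq> B \<union> C"
  shows "\<mu> A \<le> \<mu> B + \<mu> C"
proof -
  define As where "As k = (if k = 0 then B else if k = 1 then C else {})" for k :: nat
  have "ennreal (\<mu> A) \<le> (\<Sum>k. ennreal (\<mu> (As k)))"
    using assms by (intro countably_subadditive_cover) (auto simp: As_def)
  also have "\<dots> = (\<Sum>k<2. ennreal (\<mu> (As k)))"
    by (rule suminf_finite) (auto simp: As_def assms(3))
  also have "\<dots> = ennreal (\<mu> B + \<mu> C)"
    using assms(4,6,7) by (simp add: As_def numeral_2_eq_2 ennreal_plus)
  finally have "ennreal (\<mu> A) \<le> ennreal (\<mu> B + \<mu> C)" .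
  moreover have "0 \<le> \<mu> B + \<mu> C"
    using assms(4,6,7) by auto
  ultimately show ?thesis
    by (simp only: ennreal_le_iff)
qed

lemma symdiff_triangle: "symdiff A C \<subseteq> symdiff A B \<union> symdiff B C"
  by (auto simp: symdiff_def)

lemma symdiff_in_sigma_algebra:
  assumes "sigma_algebra X F" and "A \<in> F" and "B \<in> F"
  shows "symdiff A B \<in> F"
proof -
  interpret sigma_algebra X F by fact
  show ?thesis
    using assms(2,3) by (auto simp: symdiff_def)
qed

lemma dmu_nonneg:
  assumes "sigma_algebra X F" and "\<forall>A\<in>F. 0 \<le> \<mu> A" and "A \<in> F" and "B \<in> F"
  shows "0 \<le> dmu \<mu> A B"
  unfolding dmu_def using assms(2) symdiff_in_sigma_algebra[OF assms(1,3,4)] by blast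

lemma dmu_triangle:
  assumes "sigma_algebra X F" and "countably_subadditive F \<mu>" and "\<mu> {} = 0"
    and "\<forall>A\<in>F. 0 \<le> \<mu> A" and "A \<in> F" and "B \<in> F" and "C \<in> F"
  shows "dmu \<mu> A C \<le> dmu \<mu> A B + dmu \<mu> B C"
proof -
  interpret sigma_algebra X F by fact
  have "symdiff A C \<in> F" "symdiff A B \<in> F" "symdiff B C \<in> F"
    using assms(5-7) by (auto intro: symdiff_in_sigma_algebra[OF assms(1)])
  then show ?thesis
    unfolding dmu_def using assms(3,4)
    by (intro countably_subadditive_Un[OF assms(2)] symdiff_triangle) auto
qed

lemma limsup_set_eq: "limsup T = (\<Inter>i. \<Union>k\<in>{i..}. T k)"
  by (simp add: limsup_INF_SUP)

lemma limsup_in_sigma_algebra: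
  assumes "sigma_algebra X F" and "range T \<subseteq> F"
  shows "limsup T \<in> F"
proof -
  interpret sigma_algebra X F by fact
  show ?thesis
    unfolding limsup_set_eq using assms(2) by (intro countable_INT countable_UN) auto
qed

lemma symdiff_limsup_subset:
  fixes T :: "nat \<Rightarrow> 'a set"
  shows "symdiff (T j) (limsup T) \<subseteq> (\<Union>k. symdiff (T (j + k)) (T (Suc (j + k))))"
proof
  fix x
  assume x: "x \<in> symdiff (T j) (limsup T)"
  show "x \<in> (\<Union>k. symdiff (T (j + k)) (T (Suc (j + k))))"
  proof (rule ccontr)
    assume "\<not> ?thesis"
    then have "x \<in> T (j + k) \<longleftrightarrow> x \<in> T (Suc (j + k))" for k
      by (auto simp: symdiff_def)
    then have shifted: "x \<in> T (j + k) \<longleftrightarrow> x \<in> T j" for k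
      by (induction k) auto
    have const: "x \<in> T k \<longleftrightarrow> x \<in> T j" if "j \<le> k" for k
      using shifted[of "k - j"] that by simp
    have "x \<in> limsup T \<longleftrightarrow> x \<in> T j"
      unfolding limsup_set_eq
    proof
      assume "x \<in> (\<Inter>i. \<Union>k\<in>{i..}. T k)"
      then obtain k where "j \<le> k" and "x \<in> T k"
        by blast
      then show "x \<in> T j"
        using const by blast
    next
      assume "x \<in> T j"
      then have "x \<in> T (max i j)" for i
        using const[of "max i j"] by simp
      then show "x \<in> (\<Inter>i. \<Union>k\<in>{i..}. T k)"
        by (meson INT_I UN_I atLeast_iff max.cobounded1)
    qed
    then show False
      using x by (simp add: symdiff_def)
  qed
qed

lemma dmu_limsup_geometric:
  assumes "sigma_algebra X F" and "countably_subadditive F \<mu>" and "range T \<subseteq> F"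
    and "\<And>k. dmu \<mu> (T k) (T (Suc k)) \<le> (1/2)^k"
  shows "dmu \<mu> (T j) (limsup T) \<le> 2 * (1/2)^j"
proof -
  have "ennreal (dmu \<mu> (T j) (limsup T))
      \<le> (\<Sum>k. ennreal (dmu \<mu> (T (j + k)) (T (Suc (j + k)))))"
    unfolding dmu_def using assms(3) limsup_in_sigma_algebra[OF assms(1,3)]
    by (intro countably_subadditive_cover[OF assms(2)] symdiff_limsup_subset)
      (auto intro!: symdiff_in_sigma_algebra[OF assms(1)])
  also have "\<dots> \<le> (\<Sum>k. ennreal ((1/2)^(j + k)))"
    using assms(4) by (intro suminf_le) auto
  also have "\<dots> = ennreal (2 * (1/2)^j)"
  proof (rule suminf_ennreal_eq)
    show "(\<lambda>k. (1/2::real)^(j + k)) sums (2 * (1/2)^j)"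
      using sums_mult[OF geometric_sums[of "1/2::real"], of "(1/2)^j"]
      by (simp add: power_add mult.commute)
  qed simp
  finally show ?thesis
    by (simp add: ennreal_le_iff)
qed

lemma cauchy_geometric_subseq:
  assumes "\<forall>e>0. \<exists>N. \<forall>m\<ge>N. \<forall>n\<ge>N. d (S m) (S n) < (e :: real)"
  obtains r :: "nat \<Rightarrow> nat"
  where "mono r" and "\<And>k m n. r k \<le> m \<Longrightarrow> r k \<le> n \<Longrightarrow> d (S m) (S n) < (1/2)^k"
proof -
  have "\<forall>k. \<exists>N. \<forall>m\<ge>N. \<forall>n\<ge>N. d (S m) (S n) < (1/2)^k"
    using assms by simp
  then obtain N where N: "\<And>k m n. N k \<le> m \<Longrightarrow> N k \<le> n \<Longrightarrow> d (S m) (S n) < (1/2)^k"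
    by metis
  define r where "r k = (\<Sum>i\<le>k. N i)" for k
  have "mono r"
    unfolding r_def by (intro monoI sum_mono2) auto
  moreover have "N k \<le> r k" for k
    unfolding r_def by (rule member_le_sum) auto
  then have "d (S m) (S n) < (1/2)^k" if "r k \<le> m" and "r k \<le> n" for k m n
    using N that order_trans by meson
  ultimately show ?thesis
    by (rule that)
qed

lemma LIMSEQ_zero_of_tail_bounds:
  fixes a b :: "nat \<Rightarrow> real"
  assumes "\<And>j n. r j \<le> n \<Longrightarrow> \<bar>a n\<bar> \<le> b j" and "b \<longlonglongrightarrow> 0"
  shows "a \<longlonglongrightarrow> 0"
proof (rule LIMSEQ_I)
  fix e :: real
  assume "0 < e"
  then obtain j where "norm (b j - 0) < e"
    using LIMSEQ_D[OF assms(2)] by blast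
  then have "norm (a n - 0) < e" if "r j \<le> n" for n
    using assms(1)[OF that] by simp
  then show "\<exists>N. \<forall>n\<ge>N. norm (a n - 0) < e"
    by blast
qed

theorem proposition3p4:
  fixes X :: "'a set" and F :: "'a set set" and \<mu> :: "'a set \<Rightarrow> real"
  assumes "sigma_algebra X F"
    and "\<forall>A\<in>F. 0 \<le> \<mu> A \<and> \<mu> A \<le> 1"
    and "countably_subadditive F \<mu>"
    and "\<mu> {} = 0"
  shows "pseudometric_complete F (dmu \<mu>)"
  unfolding pseudometric_complete_def
proof (intro allI impI)
  have nonneg: "\<forall>A\<in>F. 0 \<le> \<mu> A"
    using assms(2) by blast
  fix S :: "nat \<Rightarrow> 'a set"
  assume SF: "range S \<subseteq> F"
    and cauchy: "\<forall>e>0. \<exists>N. \<forall>m\<ge>N. \<forall>n\<ge>N. dmu \<mu> (S m) (S n) < e"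
  obtain r where "mono r"
    and r: "\<And>k m n. r k \<le> m \<Longrightarrow> r k \<le> n \<Longrightarrow> dmu \<mu> (S m) (S n) < (1/2)^k"
    using cauchy_geometric_subseq[where d = "dmu \<mu>" and S = S, OF cauchy] by blast
  have subseqF: "range (S \<circ> r) \<subseteq> F"
    using SF by auto
  define L where "L = limsup (S \<circ> r)"
  have LF: "L \<in> F"
    unfolding L_def by (rule limsup_in_sigma_algebra[OF assms(1) subseqF])
  have "dmu \<mu> (S (r k)) (S (r (Suc k))) \<le> (1/2)^k" for k
    using r[of k "r k" "r (Suc k)"] monoD[OF \<open>mono r\<close>, of k "Suc k"] by simp
  then have tail: "dmu \<mu> (S (r j)) L \<le> 2 * (1/2)^j" for j
    unfolding L_def using dmu_limsup_geometric[OF assms(1,3) subseqF] by simp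
  have "\<bar>dmu \<mu> (S n) L\<bar> \<le> 3 * (1/2)^j" if "r j \<le> n" for j n
  proof -
    have "S n \<in> F" and "S (r j) \<in> F"
      using SF by auto
    then have "0 \<le> dmu \<mu> (S n) L"
      and "dmu \<mu> (S n) L \<le> dmu \<mu> (S n) (S (r j)) + dmu \<mu> (S (r j)) L"
      using LF dmu_nonneg[OF assms(1) nonneg] dmu_triangle[OF assms(1,3,4) nonneg] by auto
    then show ?thesis
      using r[OF that order.refl] tail[of j] by linarith
  qed
  moreover have "(\<lambda>j. 3 * (1/2::real)^j) \<longlonglongrightarrow> 0"
    by (intro tendsto_mult_right_zero LIMSEQ_realpow_zero) auto
  ultimately have "(\<lambda>n. dmu \<mu> (S n) L) \<longlonglongrightarrow> 0"
    by (rule LIMSEQ_zero_of_tail_bounds[where r = r])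
  then show "\<exists>L\<in>F. (\<lambda>n. dmu \<mu> (S n) L) \<longlonglongrightarrow> 0"
    using LF by blast
qed

end
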